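(* Let $S$ be an intra-regular semigroup and $A=(\mu_A,\nu_A)$ an IF subset of $S$. Then $A$ is an IF ideal of $S$ if and only if $\underline{A}$ is a semiprime ideal of the semigroup $(\underline{S},\circ)$.
   Context: A semigroup $S$ is intra-regular if for every $x\in S$ there are $a,b\in S$ with $x=ax^2b$. An intuitionistic fuzzy (IF) subset of $S$ is a pair $A=(\mu_A,\nu_A)$ of functions $S\to[0,1]$ with $\mu_A(x)+\nu_A(x)\le1$ for all $x$. $A$ is an IF ideal of $S$ if $\mu_A(xy)\ge\max\{\mu_A(x),\mu_A(y)\}$ and $\nu_A(xy)\le\min\{\nu_A(x),\nu_A(y)\}$ for all $x,y\in S$. For $x\in S$ and $\alpha,\beta\in[0,1]$ with $\alpha+\beta\le1$, the IF point $x_{(\alpha,\beta)}$ is the IF subset of $S$ with value $(\alpha,\beta)$ at $x$ and $(0,1)$ elsewhere (so all points $x_{(0,1)}$ coincide). $\underline{S}$ is the set of all IF points of $S$; it is a semigroup under $x_{(\alpha,\beta)}\circ y_{(\gamma,\delta)}=(xy)_{(\min(\alpha,\gamma),\max(\beta,\delta))}$. For an IF subset $A$, $\underline{A}=\{x_{(\alpha,\beta)}\in\underline{S}:\mu_A(x)\ge\alpha,\ \nu_A(x)\le\beta\}$. In a semigroup $T$, an ideal is a non-empty $I\subseteq T$ with $TI\subseteq I$ and $IT\subseteq I$; here a semiprime ideal of $T$ means an ideal $I$ such that for every $t\in T$, $t^2\in I$ implies $t\in I$. *)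

theory Defs
  imports Main "HOL.Real"
begin

text \<open>Semigroups are modelled by the type class semigroup_mult; the whole type is S.\<close>

definition intra_regular :: "'a::semigroup_mult itself \<Rightarrow> bool" where
  "intra_regular _ \<longleftrightarrow> (\<forall>x::'a. \<exists>a b. x = a * (x * x) * b)"

type_synonym 'a ifs = "('a \<Rightarrow> real) \<times> ('a \<Rightarrow> real)"

definition IF_subset :: "'a ifs \<Rightarrow> bool" where
  "IF_subset A \<longleftrightarrow> (\<forall>x. 0 \<le> fst A x \<and> fst A x \<le> 1 \<and> 0 \<le> snd A x \<and> snd A x \<le> 1
                         \<and> fst A x + snd A x \<le> 1)"

definition IF_ideal :: "'a::semigroup_mult ifs \<Rightarrow> bool" where
  "IF_ideal A \<longleftrightarrow> IF_subset A \<and>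
     (\<forall>x y. fst A (x * y) \<ge> max (fst A x) (fst A y) \<and> snd A (x * y) \<le> min (snd A x) (snd A y))"

definition ifpoint :: "'a \<Rightarrow> real \<Rightarrow> real \<Rightarrow> 'a ifs" where
  "ifpoint x \<alpha> \<beta> = ((\<lambda>y. if y = x then \<alpha> else 0), (\<lambda>y. if y = x then \<beta> else 1))"

definition valid_pair :: "real \<Rightarrow> real \<Rightarrow> bool" where
  "valid_pair \<alpha> \<beta> \<longleftrightarrow> 0 \<le> \<alpha> \<and> \<alpha> \<le> 1 \<and> 0 \<le> \<beta> \<and> \<beta> \<le> 1 \<and> \<alpha> + \<beta> \<le> 1"

definition ifpoints :: "'a ifs set" where
  "ifpoints = {ifpoint x \<alpha> \<beta> | x \<alpha> \<beta>. valid_pair \<alpha> \<beta>}"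

definition ifp_mult :: "'a::semigroup_mult ifs \<Rightarrow> 'a ifs \<Rightarrow> 'a ifs" where
  "ifp_mult P Q = (SOME R. \<exists>x \<alpha> \<beta> y \<gamma> \<delta>. valid_pair \<alpha> \<beta> \<and> valid_pair \<gamma> \<delta> \<and>
       P = ifpoint x \<alpha> \<beta> \<and> Q = ifpoint y \<gamma> \<delta> \<and>
       R = ifpoint (x * y) (min \<alpha> \<gamma>) (max \<beta> \<delta>))"

definition ifs_points :: "'a ifs \<Rightarrow> 'a ifs set" where
  "ifs_points A = {ifpoint x \<alpha> \<beta> | x \<alpha> \<beta>. valid_pair \<alpha> \<beta> \<and> fst A x \<ge> \<alpha> \<and> snd A x \<le> \<beta>}"

definition sg_ideal :: "'b set \<Rightarrow> ('b \<Rightarrow> 'b \<Rightarrow> 'b) \<Rightarrow> 'b set \<Rightarrow> bool" where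
  "sg_ideal T f I \<longleftrightarrow> I \<noteq> {} \<and> I \<subseteq> T \<and> (\<forall>t\<in>T. \<forall>i\<in>I. f t i \<in> I \<and> f i t \<in> I)"

definition semiprime_ideal :: "'b set \<Rightarrow> ('b \<Rightarrow> 'b \<Rightarrow> 'b) \<Rightarrow> 'b set \<Rightarrow> bool" where
  "semiprime_ideal T f I \<longleftrightarrow> sg_ideal T f I \<and> (\<forall>t\<in>T. f t t \<in> I \<longrightarrow> t \<in> I)"

end

theory Submission
  imports Defs
begin

(* An IF point x_(a,b) is determined by (x,a,b), except that every point with
   value (0,1) is the same null point.
   The theorem then splits into two independent facts:
   (1) for ANY semigroup and any IF subset A, underline A is an ideal of the point
       semigroup iff A is an IF ideal -- closure of underline A under multiplication by an
       arbitrary point is exactly the monotonicity mu_A x <= mu_A (xy), nu_A (xy) <= nu_A x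
       (test with the point y_(1,0) for the converse);
   (2) in an intra-regular semigroup every IF ideal satisfies mu_A (x*x) <= mu_A x and
       nu_A x <= nu_A (x*x), because x = a x^2 b; this is precisely semiprimeness of
       underline A, since x_(a,b) o x_(a,b) = (x*x)_(a,b). *)

lemma ifpoint_null: "ifpoint x 0 1 = ifpoint y 0 1"
  by (simp add: ifpoint_def)

lemma ifpoint_eqD:
  assumes "ifpoint x a b = ifpoint x' a' b'"
  shows "(x = x' \<and> a = a' \<and> b = b') \<or> (a = 0 \<and> b = 1 \<and> a' = 0 \<and> b' = 1)"
proof -
  have mu: "\<And>z. (if z = x then a else 0) = (if z = x' then a' else 0)"
    using arg_cong[OF assms, of "\<lambda>p. fst p z" for z] by (simp add: ifpoint_def)
  have nu: "\<And>z. (if z = x then b else 1) = (if z = x' then b' else 1)"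
    using arg_cong[OF assms, of "\<lambda>p. snd p z" for z] by (simp add: ifpoint_def)
  show ?thesis
    using mu[of x] nu[of x] mu[of x'] nu[of x'] by (cases "x = x'") auto
qed

lemma IF_subset_valid_pair: "IF_subset A \<Longrightarrow> valid_pair (fst A x) (snd A x)"
  by (simp add: IF_subset_def valid_pair_def)

text \<open>Membership in underline A is read off pointwise; the null point needs the bounds of A.\<close>
lemma mem_ifs_points:
  assumes "IF_subset A"
  shows "ifpoint x a b \<in> ifs_points A \<longleftrightarrow> valid_pair a b \<and> a \<le> fst A x \<and> snd A x \<le> b"
proof
  assume "ifpoint x a b \<in> ifs_points A"
  then obtain x' a' b' where eq: "ifpoint x a b = ifpoint x' a' b'"
    and mem: "valid_pair a' b'" "a' \<le> fst A x'" "snd A x' \<le> b'"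
    unfolding ifs_points_def by blast
  have "0 \<le> fst A x" "snd A x \<le> 1"
    using IF_subset_valid_pair[OF assms] by (auto simp: valid_pair_def)
  then show "valid_pair a b \<and> a \<le> fst A x \<and> snd A x \<le> b"
    using ifpoint_eqD[OF eq] mem by (auto simp: valid_pair_def)
next
  assume "valid_pair a b \<and> a \<le> fst A x \<and> snd A x \<le> b"
  then show "ifpoint x a b \<in> ifs_points A" unfolding ifs_points_def by blast
qed

lemma ifs_points_subset: "ifs_points A \<subseteq> ifpoints"
  unfolding ifs_points_def ifpoints_def by blast

text \<open>The product of IF points is well defined: x_(a,b) o y_(c,d) = (xy)_(min a c, max b d).
  Representations differ only at the null point, where both candidate products are null.\<close>
lemma ifp_mult_ifpoint:
  assumes "valid_pair a b" "valid_pair c d"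
  shows "ifp_mult (ifpoint x a b) (ifpoint y c d) = ifpoint (x * y) (min a c) (max b d)"
  unfolding ifp_mult_def
proof (rule some_equality)
  fix R
  assume "\<exists>x' \<alpha> \<beta> y' \<gamma> \<delta>. valid_pair \<alpha> \<beta> \<and> valid_pair \<gamma> \<delta> \<and>
       ifpoint x a b = ifpoint x' \<alpha> \<beta> \<and> ifpoint y c d = ifpoint y' \<gamma> \<delta> \<and>
       R = ifpoint (x' * y') (min \<alpha> \<gamma>) (max \<beta> \<delta>)"
  then obtain x' \<alpha> \<beta> y' \<gamma> \<delta> where valid: "valid_pair \<alpha> \<beta>" "valid_pair \<gamma> \<delta>"
    and eq1: "ifpoint x a b = ifpoint x' \<alpha> \<beta>" and eq2: "ifpoint y c d = ifpoint y' \<gamma> \<delta>"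
    and R: "R = ifpoint (x' * y') (min \<alpha> \<gamma>) (max \<beta> \<delta>)" by blast
  show "R = ifpoint (x * y) (min a c) (max b d)"
  proof (cases "x = x' \<and> a = \<alpha> \<and> b = \<beta> \<and> y = y' \<and> c = \<gamma> \<and> d = \<delta>")
    case True
    then show ?thesis using R by simp
  next
    case False
    then have "(a = 0 \<and> b = 1 \<and> \<alpha> = 0 \<and> \<beta> = 1) \<or> (c = 0 \<and> d = 1 \<and> \<gamma> = 0 \<and> \<delta> = 1)"
      using ifpoint_eqD[OF eq1] ifpoint_eqD[OF eq2] by blast
    then have "min a c = 0" "max b d = 1" "min \<alpha> \<gamma> = 0" "max \<beta> \<delta> = 1"
      using assms valid by (auto simp: valid_pair_def)
    then show ?thesis using R by (simp add: ifpoint_null[of "x' * y'" "x * y"])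
  qed
qed (use assms in blast)

lemma IF_ideal_iff:
  "IF_ideal A \<longleftrightarrow> IF_subset A \<and>
     (\<forall>x y. fst A x \<le> fst A (x * y) \<and> fst A y \<le> fst A (x * y)
          \<and> snd A (x * y) \<le> snd A x \<and> snd A (x * y) \<le> snd A y)"
  unfolding IF_ideal_def by auto

text \<open>Multiplying a point of underline A by the point
  y_(1,0) gives the monotonicity of A; conversely monotonicity gives closure.\<close>
lemma ifs_points_ideal_iff:
  fixes A :: "'a::semigroup_mult ifs"
  assumes A: "IF_subset A"
  shows "sg_ideal ifpoints ifp_mult (ifs_points A) \<longleftrightarrow> IF_ideal A"
proof
  assume ideal: "sg_ideal ifpoints ifp_mult (ifs_points A)"
  have "fst A x \<le> fst A (y * x) \<and> snd A (y * x) \<le> snd A x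
      \<and> fst A x \<le> fst A (x * y) \<and> snd A (x * y) \<le> snd A x" for x y
  proof -
    have vA: "valid_pair (fst A x) (snd A x)" using IF_subset_valid_pair[OF A] .
    have v10: "valid_pair 1 0" by (simp add: valid_pair_def)
    have "ifpoint x (fst A x) (snd A x) \<in> ifs_points A"
      using vA by (simp add: mem_ifs_points[OF A])
    moreover have "ifpoint y 1 0 \<in> ifpoints" unfolding ifpoints_def using v10 by blast
    ultimately have "ifp_mult (ifpoint y 1 0) (ifpoint x (fst A x) (snd A x)) \<in> ifs_points A"
                    "ifp_mult (ifpoint x (fst A x) (snd A x)) (ifpoint y 1 0) \<in> ifs_points A"
      using ideal unfolding sg_ideal_def by blast+
    moreover have "min 1 (fst A x) = fst A x" "max 0 (snd A x) = snd A x"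
                  "min (fst A x) 1 = fst A x" "max (snd A x) 0 = snd A x"
      using vA by (auto simp: valid_pair_def)
    ultimately show ?thesis
      using vA v10 by (simp add: ifp_mult_ifpoint mem_ifs_points[OF A])
  qed
  then show "IF_ideal A" using A by (auto simp: IF_ideal_iff)
next
  assume "IF_ideal A"
  then have mono: "fst A x \<le> fst A (x * y) \<and> fst A y \<le> fst A (x * y)
          \<and> snd A (x * y) \<le> snd A x \<and> snd A (x * y) \<le> snd A y" for x y
    by (simp add: IF_ideal_iff)
  have null: "ifpoint undefined 0 1 \<in> ifs_points A"
    using IF_subset_valid_pair[OF A] by (simp add: mem_ifs_points[OF A] valid_pair_def)
  have "ifp_mult t i \<in> ifs_points A \<and> ifp_mult i t \<in> ifs_points A"
    if t: "t \<in> ifpoints" and i: "i \<in> ifs_points A" for t i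
  proof -
    from t obtain y c d where t': "t = ifpoint y c d" "valid_pair c d"
      unfolding ifpoints_def by blast
    from i obtain x a b where i': "i = ifpoint x a b" "valid_pair a b"
      "a \<le> fst A x" "snd A x \<le> b"
      unfolding ifs_points_def by blast
    have "valid_pair (min c a) (max d b)" "valid_pair (min a c) (max b d)"
      using t' i' by (auto simp: valid_pair_def)
    then show ?thesis
      using t' i' mono[of y x] mono[of x y]
      by (simp add: ifp_mult_ifpoint mem_ifs_points[OF A] min_le_iff_disj le_max_iff_disj)
  qed
  then show "sg_ideal ifpoints ifp_mult (ifs_points A)"
    unfolding sg_ideal_def using null ifs_points_subset by blast
qed

text \<open>In an intra-regular semigroup an IF ideal does not grow from x to x*x:
  writing x = p (x x) q, monotonicity gives mu_A (x x) <= mu_A x and nu_A x <= nu_A (x x).\<close>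
lemma IF_ideal_square_bounds:
  fixes A :: "'a::semigroup_mult ifs"
  assumes "intra_regular TYPE('a)" and "IF_ideal A"
  shows "fst A (x * x) \<le> fst A x \<and> snd A x \<le> snd A (x * x)"
proof -
  obtain p q where x: "x = p * (x * x) * q"
    using assms(1) unfolding intra_regular_def by blast
  have "fst A (x * x) \<le> fst A (p * (x * x))" "fst A (p * (x * x)) \<le> fst A (p * (x * x) * q)"
       "snd A (p * (x * x)) \<le> snd A (x * x)" "snd A (p * (x * x) * q) \<le> snd A (p * (x * x))"
    using assms(2) by (simp_all add: IF_ideal_iff)
  then show ?thesis using x by simp
qed

text \<open>Since x_(a,b) o x_(a,b) = (x x)_(a,b), these bounds say exactly that underline A is
  semiprime.\<close>
lemma ifs_points_semiprime:
  fixes A :: "'a::semigroup_mult ifs"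
  assumes reg: "intra_regular TYPE('a)" and ideal: "IF_ideal A"
  shows "\<forall>t\<in>ifpoints. ifp_mult t t \<in> ifs_points A \<longrightarrow> t \<in> ifs_points A"
proof (intro ballI impI)
  have A: "IF_subset A" using ideal by (simp add: IF_ideal_def)
  fix t :: "'a ifs"
  assume "t \<in> ifpoints" and sq: "ifp_mult t t \<in> ifs_points A"
  then obtain x a b where t: "t = ifpoint x a b" "valid_pair a b"
    unfolding ifpoints_def by blast
  have "ifpoint (x * x) a b \<in> ifs_points A" using sq t by (simp add: ifp_mult_ifpoint)
  then have "a \<le> fst A (x * x)" "snd A (x * x) \<le> b" by (simp_all add: mem_ifs_points[OF A])
  then show "t \<in> ifs_points A"
    using IF_ideal_square_bounds[OF reg ideal, of x] t by (simp add: mem_ifs_points[OF A])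
qed

theorem theorem3p19:
  fixes A :: "'a::semigroup_mult ifs"
  assumes "intra_regular TYPE('a)"
    and "IF_subset A"
  shows "IF_ideal A \<longleftrightarrow> semiprime_ideal ifpoints ifp_mult (ifs_points A)"
  using ifs_points_ideal_iff[OF assms(2)] ifs_points_semiprime[OF assms(1)]
  unfolding semiprime_ideal_def by blast

end
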